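(* Let $S=\{p_1,\dots,p_n\}$ be a set of $n$ distinct prime numbers and let $\mathbf{U}_S=U_{p_1}\otimes\cdots\otimes U_{p_n}$ act on $\mathcal{H}^n=\mathcal{V}^{\otimes n}$. Then for real $s>0$ (more generally $\operatorname{Re}s>0$) \[\zeta_{\mathbf{U}_S}(s)=\zeta_{U_{p_1}}(s)\cdots\zeta_{U_{p_n}}(s)=\prod_{p\in S}\frac{1}{1-p^{-s}},\] where $\zeta_{U_{p_j}}$ is the spectral zeta function of $U_{p_j}$ acting on $\mathcal{V}$.
   Context: For a power series $f(x)=\sum_{n\ge0}a_nx^n$ and a positive integer $p$, $U_pf(x)=\sum_{n\ge0}a_{pn}x^n$. For $k\in\mathbb{N}=\{0,1,2,\dots\}$ let $\phi_k(x)=(x\frac{d}{dx})^k\big(\frac{1}{1-x}\big)$, and let $\mathcal{V}$ be the complex vector space spanned by $\phi_0,\phi_1,\phi_2,\dots$. Let $\mathcal{H}^n=\mathcal{V}\otimes\cdots\otimes\mathcal{V}$ ($n$ factors), where $f_1\otimes\cdots\otimes f_n$ is identified with the function $f_1(x_1)\cdots f_n(x_n)$ of $n$ variables. The operator $\mathbf{U}_S$ is defined on pure tensors by $\mathbf{U}_S(f_1\otimes\cdots\otimes f_n)(x_1,\dots,x_n)=(U_{p_1}f_1)(x_1)\cdots(U_{p_n}f_n)(x_n)$ and extended linearly. A number $\lambda$ is an eigenvalue of an operator $A$ on a space $W$ (of functions) if $AF=\lambda F$ for some nonzero $F\in W$; its multiplicity $m(\lambda)$ is the dimension of the corresponding eigenspace.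 For an operator $A$ with nonnegative discrete spectrum, its spectral zeta function is $\zeta_A(s)=\sum_{\lambda\in\operatorname{spec}(A)\setminus\{0\}}m(\lambda)\lambda^{-s}$. *)

theory Defs
  imports "HOL-Analysis.Analysis" "HOL-Computational_Algebra.Formal_Power_Series" "HOL-Library.Function_Algebras"
begin

definition xD :: "complex fps \<Rightarrow> complex fps" where
  "xD f = fps_X * fps_deriv f"

definition phi :: "nat \<Rightarrow> complex fps" where
  "phi k = (xD ^^ k) (inverse (1 - fps_X))"

definition Uop :: "nat \<Rightarrow> complex fps \<Rightarrow> complex fps" where
  "Uop p f = Abs_fps (\<lambda>n. fps_nth f (p * n))"

definition fps_scale :: "complex \<Rightarrow> complex fps \<Rightarrow> complex fps" where
  "fps_scale c f = fps_const c * f"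

definition arr_scale :: "complex \<Rightarrow> (nat list \<Rightarrow> complex) \<Rightarrow> (nat list \<Rightarrow> complex)" where
  "arr_scale c F = (\<lambda>ms. c * F ms)"

definition Vspace :: "complex fps set" where
  "Vspace = module.span fps_scale (range phi)"

section \<open>Several variables: functions of x_1..x_n as coefficient arrays indexed by
  multi-indices (m_1,...,m_n), represented as lists of length n\<close>

text \<open>f_1 (x) ... (x) f_n = f_1(x_1) ... f_n(x_n): coefficient of x_1^m_1 ... x_n^m_n.\<close>
definition tensor :: "complex fps list \<Rightarrow> (nat list \<Rightarrow> complex)" where
  "tensor fs = (\<lambda>ms. if length ms = length fs
                      then (\<Prod>i<length fs. fps_nth (fs ! i) (ms ! i)) else 0)"

definition Hspace :: "nat \<Rightarrow> (nat list \<Rightarrow> complex) set" where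
  "Hspace n = module.span arr_scale
     {tensor fs | fs. length fs = n \<and> set fs \<subseteq> Vspace}"

text \<open>U_S: the linear operator F(x_1..x_n) = sum c_m x^m  \<mapsto>  sum c_{(p_1 m_1,...,p_n m_n)} x^m.
  On pure tensors it equals (U_{p_1} f_1)(x_1)...(U_{p_n} f_n)(x_n).\<close>
definition US :: "nat list \<Rightarrow> (nat list \<Rightarrow> complex) \<Rightarrow> (nat list \<Rightarrow> complex)" where
  "US ps F = (\<lambda>ms. if length ms = length ps then F (map2 (*) ps ms) else 0)"

definition is_eigenvalue ::
    "(complex \<Rightarrow> 'v::ab_group_add \<Rightarrow> 'v) \<Rightarrow> ('v \<Rightarrow> 'v) \<Rightarrow> 'v set \<Rightarrow> complex \<Rightarrow> bool" where
  "is_eigenvalue sc A W mu \<longleftrightarrow> (\<exists>F\<in>W. F \<noteq> 0 \<and> A F = sc mu F)"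

definition eigenspace ::
    "(complex \<Rightarrow> 'v::ab_group_add \<Rightarrow> 'v) \<Rightarrow> ('v \<Rightarrow> 'v) \<Rightarrow> 'v set \<Rightarrow> complex \<Rightarrow> 'v set" where
  "eigenspace sc A W mu = {F \<in> W. A F = sc mu F}"

definition multiplicity_ev ::
    "(complex \<Rightarrow> 'v::ab_group_add \<Rightarrow> 'v) \<Rightarrow> ('v \<Rightarrow> 'v) \<Rightarrow> 'v set \<Rightarrow> complex \<Rightarrow> nat" where
  "multiplicity_ev sc A W mu = vector_space.dim sc (eigenspace sc A W mu)"

definition spec ::
    "(complex \<Rightarrow> 'v::ab_group_add \<Rightarrow> 'v) \<Rightarrow> ('v \<Rightarrow> 'v) \<Rightarrow> 'v set \<Rightarrow> complex set" where
  "spec sc A W = {mu. is_eigenvalue sc A W mu}"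

definition zeta_term ::
    "(complex \<Rightarrow> 'v::ab_group_add \<Rightarrow> 'v) \<Rightarrow> ('v \<Rightarrow> 'v) \<Rightarrow> 'v set \<Rightarrow> complex \<Rightarrow> complex \<Rightarrow> complex" where
  "zeta_term sc A W s mu = of_nat (multiplicity_ev sc A W mu) * mu powr (- s)"

definition spectral_zeta ::
    "(complex \<Rightarrow> 'v::ab_group_add \<Rightarrow> 'v) \<Rightarrow> ('v \<Rightarrow> 'v) \<Rightarrow> 'v set \<Rightarrow> complex \<Rightarrow> complex" where
  "spectral_zeta sc A W s =
     infsum (zeta_term sc A W s) (spec sc A W - {0})"

end

theory Submission
  imports Defs
begin

(* U_p is diagonal on V: the coefficients of phi_k are n^k, so U_p phi_k = p^k phi_k.  Likewise
   U_S is diagonal on H^n in the basis phi_a_1 (x) ... (x) phi_a_n, with eigenvalue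
   p_1^a_1 ... p_n^a_n.  Eigenvectors for distinct eigenvalues are linearly independent, and by
   unique factorisation these eigenvalues are pairwise distinct; so the spectrum consists exactly of
   these simple eigenvalues.  The spectral zeta function of U_p is therefore the geometric series
   sum_k p^(-k s), and that of U_S is the sum over all a of prod_i p_i^(-a_i s), which converges
   absolutely for Re s > 0 and factors into the product of these geometric series. *)

section \<open>Operators with a simple eigenbasis\<close>

locale simple_eigenbasis = Vector_Spaces.linear scale scale A
  for scale :: "complex \<Rightarrow> 'v::ab_group_add \<Rightarrow> 'v" and A :: "'v \<Rightarrow> 'v" +
  fixes b :: "'i \<Rightarrow> 'v" and ev :: "'i \<Rightarrow> complex" and I :: "'i set"
  assumes eigenvector: "i \<in> I \<Longrightarrow> A (b i) = scale (ev i) (b i)"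
    and eigenvector_nonzero: "i \<in> I \<Longrightarrow> b i \<noteq> 0"
    and inj_on_ev: "inj_on ev I"
begin

abbreviation W :: "'v set" where "W \<equiv> vs1.span (b ` I)"

lemma shifted_operator_combination:
  assumes "finite K" and "K \<subseteq> I"
  shows "A (\<Sum>i\<in>K. scale (c i) (b i)) - scale \<mu> (\<Sum>i\<in>K. scale (c i) (b i))
       = (\<Sum>i\<in>K. scale (c i * (ev i - \<mu>)) (b i))"
  using assms
  by (auto simp: sum scale eigenvector vs1.scale_sum_right vs1.scale_left_diff_distrib
      right_diff_distrib sum_subtractf[symmetric] mult.commute subset_iff intro!: sum.cong)

lemma eigenbasis_coefficients_eq_0:
  assumes "finite K" and "K \<subseteq> I" and "(\<Sum>i\<in>K. scale (c i) (b i)) = 0" and "j \<in> K"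
  shows "c j = 0"
  using assms
proof (induction K arbitrary: c j rule: finite_induct)
  case empty
  then show ?case by simp
next
  case (insert k K)
  have kI: "k \<in> I" and KI: "K \<subseteq> I"
    using insert.prems by auto
  \<comment> \<open>Applying \<open>A - ev k\<close> to the vanishing combination removes the term of \<open>b k\<close>.\<close>
  have "(\<Sum>i\<in>insert k K. scale (c i * (ev i - ev k)) (b i)) = 0"
    using shifted_operator_combination[of "insert k K" c "ev k"] insert.hyps insert.prems
    by (simp add: zero)
  then have "(\<Sum>i\<in>K. scale (c i * (ev i - ev k)) (b i)) = 0"
    using insert.hyps by simp
  then have "c i * (ev i - ev k) = 0" if "i \<in> K" for i
    using insert.IH[OF KI, where c = "\<lambda>i. c i * (ev i - ev k)"] that by blast
  moreover have "ev i \<noteq> ev k" if "i \<in> K" for i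
    using inj_on_ev kI KI that insert.hyps(2) by (metis inj_on_contraD subsetD)
  ultimately have cK: "c i = 0" if "i \<in> K" for i
    using that by simp
  then have "scale (c k) (b k) = 0"
    using insert.hyps insert.prems(2) by simp
  then have "c k = 0"
    using eigenvector_nonzero[OF kI] by simp
  with cK insert.prems show ?case by auto
qed

lemma span_eigenbasis_explicit:
  assumes "F \<in> W"
  obtains K c where "finite K" "K \<subseteq> I" "F = (\<Sum>i\<in>K. scale (c i) (b i))"
proof -
  obtain t r where t: "finite t" "t \<subseteq> b ` I" "F = (\<Sum>v\<in>t. scale (r v) v)"
    using assms unfolding vs1.span_explicit by blast
  obtain K where K: "K \<subseteq> I" "inj_on b K" "t = b ` K"
    using subset_image_inj[of t b I] t(2) by blast
  show thesis
  proof
    show "finite K" using K t(1) by (simp add: finite_image_iff)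
    show "F = (\<Sum>i\<in>K. scale (r (b i)) (b i))"
      using t(3) K(2,3) by (simp add: sum.reindex)
  qed (fact K(1))
qed

lemma eigenspace_eigenbasis: "eigenspace scale A W \<mu> = vs1.span (b ` {i \<in> I. ev i = \<mu>})"
proof
  show "eigenspace scale A W \<mu> \<subseteq> vs1.span (b ` {i \<in> I. ev i = \<mu>})"
  proof
    fix F assume "F \<in> eigenspace scale A W \<mu>"
    then have F: "F \<in> W" "A F = scale \<mu> F" by (auto simp: eigenspace_def)
    obtain K c where K: "finite K" "K \<subseteq> I" "F = (\<Sum>i\<in>K. scale (c i) (b i))"
      using span_eigenbasis_explicit[OF F(1)] .
    have "(\<Sum>i\<in>K. scale (c i * (ev i - \<mu>)) (b i)) = 0"
      using shifted_operator_combination[OF K(1,2), of c \<mu>] F(2) K(3) by simp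
    then have "c i * (ev i - \<mu>) = 0" if "i \<in> K" for i
      using eigenbasis_coefficients_eq_0[OF K(1,2), where c = "\<lambda>i. c i * (ev i - \<mu>)"] that
      by simp
    then have "F = (\<Sum>i\<in>{i \<in> K. ev i = \<mu>}. scale (c i) (b i))"
      unfolding K(3) using K(1) by (intro sum.mono_neutral_right) auto
    also have "\<dots> \<in> vs1.span (b ` {i \<in> I. ev i = \<mu>})"
      using K(2) by (intro vs1.span_sum vs1.span_scale vs1.span_base) auto
    finally show "F \<in> vs1.span (b ` {i \<in> I. ev i = \<mu>})" .
  qed
next
  have "vs1.subspace (eigenspace scale A W \<mu>)"
    unfolding vs1.subspace_def eigenspace_def
    by (auto simp: vs1.span_zero vs1.span_add vs1.span_scale add zero scale
        vs1.scale_right_distrib vs1.scale_scale mult.commute)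
  moreover have "b ` {i \<in> I. ev i = \<mu>} \<subseteq> eigenspace scale A W \<mu>"
    by (auto simp: eigenspace_def eigenvector intro: vs1.span_base)
  ultimately show "vs1.span (b ` {i \<in> I. ev i = \<mu>}) \<subseteq> eigenspace scale A W \<mu>"
    by (rule vs1.span_minimal[rotated])
qed

lemma spec_eigenbasis: "spec scale A W = ev ` I"
proof -
  have "is_eigenvalue scale A W \<mu> \<longleftrightarrow> (\<exists>F\<in>vs1.span (b ` {i \<in> I. ev i = \<mu>}). F \<noteq> 0)" for \<mu>
    unfolding is_eigenvalue_def eigenspace_eigenbasis[symmetric] eigenspace_def by blast
  also have "\<dots> \<mu> \<longleftrightarrow> \<mu> \<in> ev ` I" for \<mu>
  proof
    assume "\<exists>F\<in>vs1.span (b ` {i \<in> I. ev i = \<mu>}). F \<noteq> 0"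
    then have "{i \<in> I. ev i = \<mu>} \<noteq> {}"
      by (metis image_empty vs1.span_empty singletonD)
    then show "\<mu> \<in> ev ` I" by auto
  next
    assume "\<mu> \<in> ev ` I"
    then obtain i where "i \<in> I" "ev i = \<mu>" by blast
    then show "\<exists>F\<in>vs1.span (b ` {i \<in> I. ev i = \<mu>}). F \<noteq> 0"
      using eigenvector_nonzero by (blast intro: vs1.span_base)
  qed
  finally show ?thesis by (auto simp: spec_def)
qed

lemma multiplicity_eigenbasis:
  assumes "i \<in> I"
  shows "multiplicity_ev scale A W (ev i) = 1"
proof -
  have "{j \<in> I. ev j = ev i} = {i}"
    using assms inj_on_ev by (auto dest: inj_onD)
  then show ?thesis
    using vs1.dim_span_eq_card_independent[of "{b i}"] eigenvector_nonzero[OF assms]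
    by (simp add: multiplicity_ev_def eigenspace_eigenbasis)
qed

lemma has_sum_zeta_term_eigenbasis:
  assumes "\<And>i. i \<in> I \<Longrightarrow> ev i \<noteq> 0" and "((\<lambda>i. ev i powr - s) has_sum S) I"
  shows "(zeta_term scale A W s has_sum S) (spec scale A W - {0})"
proof -
  have "spec scale A W - {0} = ev ` I"
    using assms(1) by (auto simp: spec_eigenbasis)
  moreover have "((zeta_term scale A W s \<circ> ev) has_sum S) I"
    using assms(2) by (rule has_sum_cong[THEN iffD1, rotated])
      (simp add: zeta_term_def multiplicity_eigenbasis)
  ultimately show ?thesis
    by (simp add: has_sum_reindex[OF inj_on_ev])
qed

end

section \<open>Products of geometric series\<close>

lemma has_sum_geometric:
  fixes z :: "'a::{real_normed_field, banach}"
  assumes "norm z < 1"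
  shows "((\<lambda>k. z ^ k) has_sum (1 / (1 - z))) UNIV"
proof (rule norm_summable_imp_has_sum)
  show "summable (\<lambda>k. norm (z ^ k))"
    using assms by (simp add: norm_power summable_geometric)
  show "(\<lambda>k. z ^ k) sums (1 / (1 - z))"
    using geometric_sums[OF assms] by simp
qed

lemma has_sum_prod_geometric_PiE:
  fixes z :: "'a \<Rightarrow> complex"
  assumes "finite A" and "\<And>x. x \<in> A \<Longrightarrow> norm (z x) < 1"
  shows "((\<lambda>g. \<Prod>x\<in>A. z x ^ g x) has_sum (\<Prod>x\<in>A. 1 / (1 - z x))) (PiE A (\<lambda>_. UNIV))"
proof -
  have geometric: "((\<lambda>k. z x ^ k) has_sum (1 / (1 - z x))) UNIV" if "x \<in> A" for x
    using has_sum_geometric assms(2) that by blast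
  have abs_geometric: "(\<lambda>k. norm (z x ^ k)) summable_on UNIV" if "x \<in> A" for x
    using has_sum_geometric[of "norm (z x)"] assms(2) that
    by (auto simp: norm_power summable_on_def)
  \<comment> \<open>Summability over \<open>PiE\<close> is proved in the library only for the integral-based notion of Infinite_Set_Sum.\<close>
  have "Infinite_Set_Sum.abs_summable_on (\<lambda>g. \<Prod>x\<in>A. z x ^ g x) (PiE A (\<lambda>_. UNIV))"
    using assms(1) abs_geometric
    by (intro abs_summable_on_prod_PiE) (auto simp: abs_summable_equivalent)
  then have summable: "(\<lambda>g. \<Prod>x\<in>A. z x ^ g x) summable_on PiE A (\<lambda>_. UNIV)"
    by (simp add: abs_summable_summable flip: abs_summable_equivalent)
  have "infsum (\<lambda>g. \<Prod>x\<in>A. z x ^ g x) (PiE A (\<lambda>_. UNIV))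
      = (\<Prod>x\<in>A. infsum (\<lambda>k. z x ^ k) UNIV)"
    using assms(1) abs_geometric by (rule infsum_prod_PiE_abs)
  also have "\<dots> = (\<Prod>x\<in>A. 1 / (1 - z x))"
    using geometric by (intro prod.cong infsumI) auto
  finally show ?thesis
    using summable by (metis summable_iff_has_sum_infsum)
qed

lemma of_nat_prod_powr:
  "(of_nat (\<Prod>i\<in>A. f i) :: complex) powr z = (\<Prod>i\<in>A. of_nat (f i) powr z)"
proof (induction A rule: infinite_finite_induct)
  case (insert i A)
  then show ?case
    by (simp add: powr_times_real_left flip: of_nat_prod)
qed simp_all

lemma of_nat_power_powr: "(of_nat (m ^ k) :: complex) powr z = (of_nat m powr z) ^ k"
  using of_nat_prod_powr[of "\<lambda>_. m" "{..<k}" z] by simp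

lemma norm_of_nat_powr_less_1:
  assumes "m \<ge> 2" and "Re s > 0"
  shows "norm (of_nat m powr - s :: complex) < 1"
proof -
  have "norm (of_nat m powr - s :: complex) = real m powr - Re s"
    by (simp add: norm_powr_real_powr)
  also have "\<dots> < 1"
    using assms by (intro powr_less_one) auto
  finally show ?thesis .
qed

section \<open>The operator U_p\<close>

lemma vector_space_fps_scale: "vector_space fps_scale"
  by unfold_locales (simp_all add: fps_scale_def fps_eq_iff algebra_simps)

interpretation fps: vector_space fps_scale
  by (fact vector_space_fps_scale)

lemma phi_nth: "fps_nth (phi k) n = of_nat n ^ k"
proof (induction k)
  case 0
  then show ?case by (simp add: phi_def fps_inverse_one_minus_fps_X)
next
  case (Suc k)
  then show ?case
    by (cases n) (simp_all add: phi_def xD_def fps_X_mult_nth fps_deriv_nth)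
qed

lemma phi_nonzero: "phi k \<noteq> 0"
proof
  assume "phi k = 0"
  then have "fps_nth (phi k) 1 = 0" by simp
  then show False by (simp add: phi_nth)
qed

lemma linear_Uop: "Vector_Spaces.linear fps_scale fps_scale (Uop p)"
  by (auto simp: Vector_Spaces.linear_iff vector_space_fps_scale Uop_def fps_scale_def fps_eq_iff)

lemma Uop_phi: "Uop p (phi k) = fps_scale (of_nat (p ^ k)) (phi k)"
  by (simp add: Uop_def fps_eq_iff fps_scale_def phi_nth power_mult_distrib)

lemma simple_eigenbasis_Uop:
  assumes "p \<ge> 2"
  shows "simple_eigenbasis fps_scale (Uop p) phi (\<lambda>k. of_nat (p ^ k)) UNIV"
proof (intro simple_eigenbasis.intro linear_Uop simple_eigenbasis_axioms.intro)
  show "inj_on (\<lambda>k. of_nat (p ^ k) :: complex) UNIV"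
    using assms by (auto intro!: injI simp del: of_nat_power simp: of_nat_eq_iff)
qed (simp_all add: Uop_phi phi_nonzero)

lemma has_sum_zeta_term_Uop:
  assumes "prime p" and "Re s > 0"
  shows "(zeta_term fps_scale (Uop p) Vspace s has_sum (1 / (1 - of_nat p powr - s)))
           (spec fps_scale (Uop p) Vspace - {0})"
proof -
  have p: "p \<ge> 2" using assms(1) prime_ge_2_nat by blast
  show ?thesis
    unfolding Vspace_def
  proof (rule simple_eigenbasis.has_sum_zeta_term_eigenbasis[OF simple_eigenbasis_Uop[OF p]])
    show "((\<lambda>k. of_nat (p ^ k) powr - s) has_sum (1 / (1 - of_nat p powr - s))) UNIV"
      unfolding of_nat_power_powr
      by (rule has_sum_geometric[OF norm_of_nat_powr_less_1[OF p assms(2)]])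
  qed (use p in simp)
qed

section \<open>The operator U_S\<close>

lemma vector_space_arr_scale: "vector_space arr_scale"
  by unfold_locales (simp_all add: arr_scale_def fun_eq_iff algebra_simps)

interpretation arr: vector_space arr_scale
  by (fact vector_space_arr_scale)

definition fps_tensor :: "complex fps \<Rightarrow> (nat list \<Rightarrow> complex) \<Rightarrow> nat list \<Rightarrow> complex" where
  "fps_tensor g F = (\<lambda>ms. case ms of [] \<Rightarrow> 0 | m # ms' \<Rightarrow> fps_nth g m * F ms')"

lemma tensor_Cons: "tensor (f # fs) = fps_tensor f (tensor fs)"
  by (auto simp: fun_eq_iff tensor_def fps_tensor_def prod.lessThan_Suc_shift
      simp del: prod.lessThan_Suc split: list.split)

lemma linear_fps_tensor_right: "Vector_Spaces.linear arr_scale arr_scale (fps_tensor g)"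
  by (auto simp: Vector_Spaces.linear_iff vector_space_arr_scale fps_tensor_def arr_scale_def
      fun_eq_iff algebra_simps split: list.split)

lemma linear_fps_tensor_left: "Vector_Spaces.linear fps_scale arr_scale (\<lambda>g. fps_tensor g F)"
  by (auto simp: Vector_Spaces.linear_iff vector_space_fps_scale vector_space_arr_scale
      fps_tensor_def arr_scale_def fps_scale_def fun_eq_iff algebra_simps split: list.split)

lemma fps_tensor_in_span:
  assumes "g \<in> fps.span G" and "F \<in> arr.span S"
  shows "fps_tensor g F \<in> arr.span {fps_tensor g' F' | g' F'. g' \<in> G \<and> F' \<in> S}"
    (is "_ \<in> arr.span ?T")
proof -
  have "fps_tensor g' F \<in> arr.span ?T" if "g' \<in> G" for g'
  proof -
    have "fps_tensor g' F \<in> fps_tensor g' ` arr.span S"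
      using assms(2) by (rule imageI)
    also have "\<dots> = arr.span (fps_tensor g' ` S)"
      by (rule module_hom.span_image[OF module_hom_linearI[OF linear_fps_tensor_right], symmetric])
    also have "\<dots> \<subseteq> arr.span ?T"
      using that by (intro arr.span_mono) blast
    finally show ?thesis .
  qed
  then have "arr.span ((\<lambda>g. fps_tensor g F) ` G) \<subseteq> arr.span ?T"
    by (intro arr.span_minimal) auto
  moreover have "fps_tensor g F \<in> (\<lambda>g. fps_tensor g F) ` fps.span G"
    using assms(1) by (rule imageI)
  moreover have "(\<lambda>g. fps_tensor g F) ` fps.span G = arr.span ((\<lambda>g. fps_tensor g F) ` G)"
    by (rule module_hom.span_image[OF module_hom_linearI[OF linear_fps_tensor_left], symmetric])
  ultimately show ?thesis
    by blast
qed

definition phi_tensor :: "nat list \<Rightarrow> nat list \<Rightarrow> complex" where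
  "phi_tensor a = tensor (map phi a)"

lemma tensor_in_span_phi_tensor:
  "set fs \<subseteq> Vspace \<Longrightarrow> tensor fs \<in> arr.span (phi_tensor ` {a. length a = length fs})"
proof (induction fs)
  case Nil
  have "tensor [] = phi_tensor []" by (simp add: phi_tensor_def)
  then show ?case by (auto intro: arr.span_base)
next
  case (Cons f fs)
  have "tensor (f # fs) = fps_tensor f (tensor fs)"
    by (rule tensor_Cons)
  also have "\<dots> \<in> arr.span {fps_tensor g F | g F. g \<in> range phi \<and> F \<in> phi_tensor ` {a. length a = length fs}}"
    using Cons by (intro fps_tensor_in_span) (auto simp: Vspace_def)
  also have "\<dots> \<subseteq> arr.span (phi_tensor ` {a. length a = length (f # fs)})"
  proof (intro arr.span_mono subsetI)
    fix F assume "F \<in> {fps_tensor g F | g F. g \<in> range phi \<and> F \<in> phi_tensor ` {a. length a = length fs}}"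
    then obtain k a where "F = phi_tensor (k # a)" "length a = length fs"
      by (auto simp: phi_tensor_def tensor_Cons)
    then show "F \<in> phi_tensor ` {a. length a = length (f # fs)}" by force
  qed
  finally show ?case .
qed

lemma Hspace_eq_span_phi_tensor: "Hspace n = arr.span (phi_tensor ` {a. length a = n})"
proof (rule antisym)
  show "Hspace n \<subseteq> arr.span (phi_tensor ` {a. length a = n})"
    unfolding Hspace_def using tensor_in_span_phi_tensor by (intro arr.span_minimal) auto
  have "phi_tensor ` {a. length a = n} \<subseteq> {tensor fs | fs. length fs = n \<and> set fs \<subseteq> Vspace}"
    by (auto simp: phi_tensor_def Vspace_def intro!: exI[of _ "map phi _"] fps.span_base)
  then show "arr.span (phi_tensor ` {a. length a = n}) \<subseteq> Hspace n"
    unfolding Hspace_def by (rule arr.span_mono)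
qed

lemma phi_tensor_apply:
  "phi_tensor a ms = (if length ms = length a then \<Prod>i<length a. of_nat (ms ! i) ^ (a ! i) else 0)"
  by (simp add: phi_tensor_def tensor_def phi_nth)

lemma phi_tensor_nonzero: "phi_tensor a \<noteq> 0"
proof
  assume "phi_tensor a = 0"
  then have "phi_tensor a (replicate (length a) 1) = 0" by simp
  then show False by (simp add: phi_tensor_apply)
qed

definition US_eigenvalue :: "nat list \<Rightarrow> nat list \<Rightarrow> nat" where
  "US_eigenvalue ps a = (\<Prod>i<length ps. ps ! i ^ a ! i)"

lemma linear_US: "Vector_Spaces.linear arr_scale arr_scale (US ps)"
  by (auto simp: Vector_Spaces.linear_iff vector_space_arr_scale US_def arr_scale_def fun_eq_iff)

lemma US_phi_tensor:
  assumes "length a = length ps"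
  shows "US ps (phi_tensor a) = arr_scale (of_nat (US_eigenvalue ps a)) (phi_tensor a)"
proof
  fix ms
  show "US ps (phi_tensor a) ms = arr_scale (of_nat (US_eigenvalue ps a)) (phi_tensor a) ms"
    using assms
    by (simp add: US_def arr_scale_def phi_tensor_apply US_eigenvalue_def power_mult_distrib
        prod.distrib)
qed

lemma multiplicity_US_eigenvalue:
  assumes "distinct ps" and "\<forall>p\<in>set ps. prime p" and "j < length ps"
  shows "multiplicity (ps ! j) (US_eigenvalue ps a) = a ! j"
proof -
  have prime: "prime (ps ! i)" and nonzero: "ps ! i \<noteq> 0" if "i < length ps" for i
    using assms(2) that by (auto simp: prime_gt_0_nat)
  have "multiplicity (ps ! j) (US_eigenvalue ps a)
      = (\<Sum>i<length ps. multiplicity (ps ! j) (ps ! i ^ a ! i))"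
    unfolding US_eigenvalue_def using prime[OF assms(3)]
    by (intro prime_elem_multiplicity_prod_distrib) (auto dest: nonzero)
  also have "\<dots> = (\<Sum>i<length ps. if i = j then a ! j else 0)"
  proof (intro sum.cong refl)
    fix i assume "i \<in> {..<length ps}"
    then show "multiplicity (ps ! j) (ps ! i ^ a ! i) = (if i = j then a ! j else 0)"
      using prime nonzero assms(1,3)
      by (auto simp: prime_elem_multiplicity_power_distrib prime_multiplicity_other
          nth_eq_iff_index_eq)
  qed
  also have "\<dots> = a ! j"
    using assms(3) by simp
  finally show ?thesis .
qed

lemma inj_on_US_eigenvalue:
  assumes "distinct ps" and "\<forall>p\<in>set ps. prime p"
  shows "inj_on (US_eigenvalue ps) {a. length a = length ps}"
proof (rule inj_onI)
  fix a a' assume a: "a \<in> {a. length a = length ps}" "a' \<in> {a. length a = length ps}"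
    and eq: "US_eigenvalue ps a = US_eigenvalue ps a'"
  have "a ! j = a' ! j" if "j < length ps" for j
    using multiplicity_US_eigenvalue[OF assms that] eq by metis
  then show "a = a'"
    using a by (intro nth_equalityI) auto
qed

lemma simple_eigenbasis_US:
  assumes "distinct ps" and "\<forall>p\<in>set ps. prime p"
  shows "simple_eigenbasis arr_scale (US ps) phi_tensor (\<lambda>a. of_nat (US_eigenvalue ps a))
           {a. length a = length ps}"
proof (intro simple_eigenbasis.intro linear_US simple_eigenbasis_axioms.intro)
  show "inj_on (\<lambda>a. of_nat (US_eigenvalue ps a) :: complex) {a. length a = length ps}"
    using inj_on_US_eigenvalue[OF assms] by (simp add: inj_on_def)
qed (simp_all add: US_phi_tensor phi_tensor_nonzero)

lemma has_sum_US_eigenvalue_powr: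
  assumes "distinct ps" and "\<forall>p\<in>set ps. prime p" and "Re s > 0"
  shows "((\<lambda>a. of_nat (US_eigenvalue ps a) powr - s)
           has_sum (\<Prod>p\<in>set ps. 1 / (1 - of_nat p powr - s))) {a. length a = length ps}"
proof -
  let ?n = "length ps"
  define z where "z i = (of_nat (ps ! i) powr - s :: complex)" for i
  have "((\<lambda>g. \<Prod>i<?n. z i ^ g i) has_sum (\<Prod>i<?n. 1 / (1 - z i))) (PiE {..<?n} (\<lambda>_. UNIV))"
    using assms(2,3) unfolding z_def
    by (intro has_sum_prod_geometric_PiE norm_of_nat_powr_less_1) (auto intro: prime_ge_2_nat)
  moreover have "of_nat (US_eigenvalue ps a) powr - s = (\<Prod>i<?n. z i ^ a ! i)" for a
    unfolding US_eigenvalue_def of_nat_prod_powr of_nat_power_powr z_def ..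
  moreover have "(\<Prod>i<?n. 1 / (1 - z i)) = (\<Prod>p\<in>set ps. 1 / (1 - of_nat p powr - s))"
    unfolding z_def using bij_betw_nth[OF assms(1) refl refl] by (rule prod.reindex_bij_betw)
  ultimately show ?thesis
    by (subst has_sum_reindex_bij_witness[where i = "\<lambda>g. map g [0..<?n]"
          and j = "\<lambda>a. restrict (nth a) {..<?n}"])
      (auto simp: PiE_iff extensional_def fun_eq_iff intro: nth_equalityI)
qed

lemma has_sum_zeta_term_US:
  assumes "distinct ps" and "\<forall>p\<in>set ps. prime p" and "Re s > 0"
  shows "(zeta_term arr_scale (US ps) (Hspace (length ps)) s
           has_sum (\<Prod>p\<in>set ps. 1 / (1 - of_nat p powr - s)))
           (spec arr_scale (US ps) (Hspace (length ps)) - {0})"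
  unfolding Hspace_eq_span_phi_tensor
proof (rule simple_eigenbasis.has_sum_zeta_term_eigenbasis[OF simple_eigenbasis_US[OF assms(1,2)]])
  show "((\<lambda>a. of_nat (US_eigenvalue ps a) powr - s)
          has_sum (\<Prod>p\<in>set ps. 1 / (1 - of_nat p powr - s))) {a. length a = length ps}"
    using assms by (rule has_sum_US_eigenvalue_powr)
qed (use assms(2) in \<open>auto simp: prime_gt_0_nat US_eigenvalue_def\<close>)

theorem mainTheorem4:
  fixes ps :: "nat list" and s :: complex
  assumes "distinct ps" and "\<forall>p\<in>set ps. prime p" and "Re s > 0"
  shows "zeta_term arr_scale (US ps) (Hspace (length ps)) s
           summable_on (spec arr_scale (US ps) (Hspace (length ps)) - {0})
       \<and> spectral_zeta arr_scale (US ps) (Hspace (length ps)) s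
           = (\<Prod>p\<in>set ps. spectral_zeta fps_scale (Uop p) Vspace s)
       \<and> (\<Prod>p\<in>set ps. spectral_zeta fps_scale (Uop p) Vspace s)
           = (\<Prod>p\<in>set ps. 1 / (1 - of_nat p powr (- s)))"
proof -
  note product = has_sum_zeta_term_US[OF assms]
  have "spectral_zeta fps_scale (Uop p) Vspace s = 1 / (1 - of_nat p powr - s)"
    if "p \<in> set ps" for p
    unfolding spectral_zeta_def using has_sum_zeta_term_Uop that assms(2,3) by (simp add: infsumI)
  then have "(\<Prod>p\<in>set ps. spectral_zeta fps_scale (Uop p) Vspace s)
      = (\<Prod>p\<in>set ps. 1 / (1 - of_nat p powr - s))"
    by (rule prod.cong[OF refl])
  moreover have "spectral_zeta arr_scale (US ps) (Hspace (length ps)) s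
      = (\<Prod>p\<in>set ps. 1 / (1 - of_nat p powr - s))"
    unfolding spectral_zeta_def using product by (rule infsumI)
  ultimately show ?thesis
    using product by (auto simp: summable_on_def)
qed

end
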